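(* For $k\in\{1,\dots,2n\}$ and $m\in\mathbb{Z}$, let \[ M_k(m)=\{X_{i_1}(k+m-1)X_{i_2}(k+m-2)\cdots X_{i_k}(m)\;:\; i_j\in\mathcal{I},\ i_1<i_2<\cdots<i_k\}. \] Then, as crystals, \[ M_k(m)\cong\begin{cases}\mathcal{M}(Y_k(m)) & \text{if } k\in\{1,\dots,n\},\\ \mathcal{M}(Y_{2n-k}(m-n+k)) & \text{if } k\in\{n+1,\dots,2n\}.\end{cases} \]
   Context: Fix $n\ge 2$ and type $C_n$ with $I=\{1,\dots,n\}$ and fundamental weights $\Lambda_i$. Let $\mathcal{M}$ be the set of Laurent monomials $M=\prod_{i\in I,k\in\mathbb{Z}}Y_i(k)^{y_i(k)}$ ($y_i(k)\in\mathbb{Z}$, finitely many nonzero); put $Y_0(k)=Y_{n+1}(k)=1$, $A_i(k)=Y_i(k)Y_i(k+1)Y_{i-1}(k+1)^{-1}Y_{i+1}(k)^{-1}$ ($i\ne n$), $A_n(k)=Y_n(k)Y_n(k+1)Y_{n-1}(k+1)^{-2}$. Crystal structure: $\mathrm{wt}(M)=\sum_i(\sum_k y_i(k))\Lambda_i$, $\varphi_i(M)=\max_k\sum_{j\le k}y_i(j)$, $\varepsilon_i(M)=\max_k(-\sum_{j>k}y_i(j))$; $\tilde f_iM=0$ if $\varphi_i(M)=0$, else $A_i(n_f)^{-1}M$ with $n_f=\min\{k:\varphi_i(M)=\sum_{j\le k}y_i(j)\}$; $\tilde e_iM=0$ if $\varepsilon_i(M)=0$, else $A_i(n_e)M$ with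 $n_e=\max\{k:\varphi_i(M)=\sum_{j\le k}y_i(j)\}$. For a highest weight monomial $Y$ ($\varepsilon_i(Y)=0$ for all $i$), $\mathcal{M}(Y)$ is the connected component of $\mathcal{M}$ containing $Y$ (with $\mathcal{M}(Y_0(\cdot))=\mathcal{M}(1)=\{1\}$). The $X$-variables are $X_i(k)=Y_i(k)Y_{i-1}(k+1)^{-1}$ for $1\le i\le n$ and $X_{\bar i}(k)=Y_{i-1}(k+n-i+1)Y_i(k+n-i+1)^{-1}$ for $1\le i\le n$. The alphabet $\mathcal{I}=\{1,\dots,n,\bar n,\dots,\bar 1\}$ is totally ordered by $1<2<\cdots<n<\bar n<\cdots<\bar 2<\bar 1$. *)

theory Defs
  imports Main
begin

text \<open>Laurent monomials in the variables Y_i(k), i in {1..n}, k in Z, are represented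
by their exponent functions y :: nat => int => int (y i k = exponent of Y_i(k)).  The type C_n data n is an
explicit parameter.\<close>

type_synonym mono = "nat \<Rightarrow> int \<Rightarrow> int"

definition mmul :: "mono \<Rightarrow> mono \<Rightarrow> mono" where
  "mmul y z = (\<lambda>a b. y a b + z a b)"

definition minv :: "mono \<Rightarrow> mono" where
  "minv y = (\<lambda>a b. - y a b)"

definition mone :: mono where
  "mone = (\<lambda>a b. 0)"

text \<open>Y_i(k); Y_0(k) = Y_{n+1}(k) = 1 (and any index outside 1..n gives 1).\<close>
definition Ymon :: "nat \<Rightarrow> nat \<Rightarrow> int \<Rightarrow> mono" where
  "Ymon n i k = (\<lambda>a b. if 1 \<le> i \<and> i \<le> n \<and> a = i \<and> b = k then 1 else 0)"

definition valid_mono :: "nat \<Rightarrow> mono \<Rightarrow> bool" where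
  "valid_mono n y \<longleftrightarrow> finite {(a, b). y a b \<noteq> 0} \<and> (\<forall>a b. y a b \<noteq> 0 \<longrightarrow> 1 \<le> a \<and> a \<le> n)"

definition Amon :: "nat \<Rightarrow> nat \<Rightarrow> int \<Rightarrow> mono" where
  "Amon n i k =
    (if i = n then
       mmul (mmul (Ymon n n k) (Ymon n n (k + 1)))
            (minv (mmul (Ymon n (n - 1) (k + 1)) (Ymon n (n - 1) (k + 1))))
     else
       mmul (mmul (Ymon n i k) (Ymon n i (k + 1)))
            (minv (mmul (Ymon n (i - 1) (k + 1)) (Ymon n (i + 1) k))))"

text \<open>weight: coefficient of Lambda_i in wt(M)\<close>
definition wt :: "mono \<Rightarrow> nat \<Rightarrow> int" where
  "wt y i = sum (y i) {j. y i j \<noteq> 0}"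

definition psum :: "mono \<Rightarrow> nat \<Rightarrow> int \<Rightarrow> int" where
  "psum y i k = sum (y i) {j. j \<le> k \<and> y i j \<noteq> 0}"

definition phi :: "mono \<Rightarrow> nat \<Rightarrow> int" where
  "phi y i = Max (range (psum y i))"

definition eps :: "mono \<Rightarrow> nat \<Rightarrow> int" where
  "eps y i = Max (range (\<lambda>k. - sum (y i) {j. k < j \<and> y i j \<noteq> 0}))"

definition nf :: "mono \<Rightarrow> nat \<Rightarrow> int" where
  "nf y i = (LEAST k. phi y i = psum y i k)"

definition ne :: "mono \<Rightarrow> nat \<Rightarrow> int" where
  "ne y i = (GREATEST k. phi y i = psum y i k)"

text \<open>Kashiwara operators; None represents 0.\<close>
definition ftil :: "nat \<Rightarrow> nat \<Rightarrow> mono \<Rightarrow> mono option" where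
  "ftil n i y = (if phi y i = 0 then None else Some (mmul (minv (Amon n i (nf y i))) y))"

definition etil :: "nat \<Rightarrow> nat \<Rightarrow> mono \<Rightarrow> mono option" where
  "etil n i y = (if eps y i = 0 then None else Some (mmul (Amon n i (ne y i)) y))"

inductive_set component :: "nat \<Rightarrow> mono \<Rightarrow> mono set" for n :: nat and Y :: mono where
  base: "Y \<in> component n Y"
| fstep: "M \<in> component n Y \<Longrightarrow> i \<in> {1..n} \<Longrightarrow> ftil n i M = Some M' \<Longrightarrow> M' \<in> component n Y"
| estep: "M \<in> component n Y \<Longrightarrow> i \<in> {1..n} \<Longrightarrow> etil n i M = Some M' \<Longrightarrow> M' \<in> component n Y"

text \<open>X-variables.  The alphabet 1 < ... < n < nbar < ... < 1bar is encoded by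
1, ..., 2n: letter a <= n is the unbarred a, letter a > n is bar(2n+1-a).\<close>
definition Xmon :: "nat \<Rightarrow> nat \<Rightarrow> int \<Rightarrow> mono" where
  "Xmon n i k = mmul (Ymon n i k) (minv (Ymon n (i - 1) (k + 1)))"

definition Xbar :: "nat \<Rightarrow> nat \<Rightarrow> int \<Rightarrow> mono" where
  "Xbar n i k = mmul (Ymon n (i - 1) (k + int n - int i + 1)) (minv (Ymon n i (k + int n - int i + 1)))"

definition Xlet :: "nat \<Rightarrow> nat \<Rightarrow> int \<Rightarrow> mono" where
  "Xlet n a k = (if a \<le> n then Xmon n a k else Xbar n (2 * n + 1 - a) k)"

definition Mk :: "nat \<Rightarrow> nat \<Rightarrow> int \<Rightarrow> mono set" where
  "Mk n k m = {(\<lambda>a b. \<Sum>j\<in>{1..k}. Xlet n (ii j) (int k + m - int j) a b) | ii.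
      strict_mono_on {1..k} ii \<and> (\<forall>j\<in>{1..k}. ii j \<in> {1..2 * n})}"

definition closed_sub :: "nat \<Rightarrow> mono set \<Rightarrow> bool" where
  "closed_sub n S \<longleftrightarrow> (\<forall>M\<in>S. \<forall>i\<in>{1..n}.
      (\<forall>M'. ftil n i M = Some M' \<longrightarrow> M' \<in> S) \<and> (\<forall>M'. etil n i M = Some M' \<longrightarrow> M' \<in> S))"

definition crystal_iso :: "nat \<Rightarrow> mono set \<Rightarrow> mono set \<Rightarrow> bool" where
  "crystal_iso n S T \<longleftrightarrow> closed_sub n S \<and> closed_sub n T \<and>
    (\<exists>\<Phi>. bij_betw \<Phi> S T \<and>
      (\<forall>M\<in>S. \<forall>i\<in>{1..n}.
         wt (\<Phi> M) i = wt M i \<and> phi (\<Phi> M) i = phi M i \<and> eps (\<Phi> M) i = eps M i \<and>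
         ftil n i (\<Phi> M) = map_option \<Phi> (ftil n i M) \<and>
         etil n i (\<Phi> M) = map_option \<Phi> (etil n i M)))"

end

theory Submission
  imports Defs
begin

text \<open>
  Raising a letter x to x+1 multiplies it by A_i(s)^{-1}, where x -> x+1 is the i-arrow of the
  crystal of the vector representation and s depends only on x and the position of the letter.
  Row i of the monomial is the sum of the contributions of the letter pairs (x, x+1) joined by an
  i-arrow: +1 if only x occurs, -1 if only x+1 occurs, nothing if both occur (they then occupy
  adjacent positions and cancel).  Reading the signature rule on these rows, f_i raises and e_i
  lowers a single letter, so M_k(m) is closed under the Kashiwara operators.  The identity word
  1 < ... < k gives Y_k(m), resp. Y_{2n-k}(m-n+k), and every other word admits some e_i: at the
  first position j with w_j > j the letter w_j - 1 is missing, and its -1 is either unmatched in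
  its row or, if it is cancelled by a barred partner, the start of the block of consecutive barred
  letters ending at that partner yields another unmatched -1.  As e_i lowers the sum of the
  letters, induction shows that M_k(m) is the connected component of the identity word, and the
  identity map is the required isomorphism.
\<close>

section \<open>Partial sums of a row and the signature rule\<close>

lemma int_minimum_exists:
  fixes Q :: "int \<Rightarrow> bool"
  assumes "Q x" and "\<And>y. Q y \<Longrightarrow> L \<le> y"
  obtains z where "Q z" and "\<And>y. Q y \<Longrightarrow> z \<le> y"
proof -
  obtain z where "Q z" and "\<forall>y. Q y \<longrightarrow> nat (z - L) \<le> nat (y - L)"
    using ex_has_least_nat[of Q x "\<lambda>y. nat (y - L)"] assms(1) by blast
  with assms(2) show thesis by (smt (verit) nat_le_eq_zle that)
qed

lemma int_maximum_exists:
  fixes Q :: "int \<Rightarrow> bool"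
  assumes "Q x" and "\<And>y. Q y \<Longrightarrow> y \<le> H"
  obtains z where "Q z" and "\<And>y. Q y \<Longrightarrow> y \<le> z"
proof -
  obtain z where "Q z" and "\<forall>y. Q y \<longrightarrow> nat (H - z) \<le> nat (H - y)"
    using ex_has_least_nat[of Q x "\<lambda>y. nat (H - y)"] assms(1) by blast
  with assms(2) show thesis by (smt (verit) nat_le_eq_zle that)
qed

lemma psum_eq_sum_superset:
  assumes "finite F" and "\<And>b. b \<notin> F \<Longrightarrow> y i b = 0"
  shows "psum y i k = sum (y i) {j \<in> F. j \<le> k}"
  unfolding psum_def by (rule sum.mono_neutral_cong_left) (use assms in auto)

lemma psum_mmul:
  assumes "finite {b. y i b \<noteq> 0}" and "finite {b. z i b \<noteq> 0}"
  shows "psum (mmul y z) i k = psum y i k + psum z i k"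
proof -
  let ?F = "{b. y i b \<noteq> 0} \<union> {b. z i b \<noteq> 0}"
  have "finite ?F" using assms by simp
  then show ?thesis
    using psum_eq_sum_superset[OF \<open>finite ?F\<close>, of "mmul y z" i k]
      psum_eq_sum_superset[OF \<open>finite ?F\<close>, of y i k] psum_eq_sum_superset[OF \<open>finite ?F\<close>, of z i k]
    by (simp add: mmul_def sum.distrib)
qed

lemma nf_eqI:
  assumes "psum y i k = phi y i" and "\<And>j. j < k \<Longrightarrow> psum y i j < phi y i"
  shows "nf y i = k"
  unfolding nf_def by (rule Least_equality) (use assms in \<open>auto simp: not_less[symmetric]\<close>)

context
  fixes y :: mono and i :: nat
  assumes finite_support: "finite {b. y i b \<noteq> 0}"
begin

lemma finite_range_psum: "finite (range (psum y i))"
proof (rule finite_subset)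
  show "range (psum y i) \<subseteq> sum (y i) ` Pow {b. y i b \<noteq> 0}"
    unfolding psum_def by blast
qed (use finite_support in simp)

lemma psum_le_phi: "psum y i k \<le> phi y i"
  unfolding phi_def using finite_range_psum by simp

lemma phi_attained: obtains k where "psum y i k = phi y i"
  using Max_in[OF finite_range_psum] unfolding phi_def by auto

lemma phi_eqI:
  assumes "\<And>j. psum y i j \<le> v" and "psum y i k = v"
  shows "phi y i = v"
  unfolding phi_def by (rule Max_eqI[OF finite_range_psum]) (use assms in \<open>auto intro: sym\<close>)

lemma psum_below_support: "\<exists>L. \<forall>k \<le> L. psum y i k = 0"
proof -
  obtain L where L: "\<And>j. y i j \<noteq> 0 \<Longrightarrow> L \<le> j"
    using bdd_below_finite[OF finite_support] unfolding bdd_below_def by auto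
  have "{j. j \<le> k \<and> y i j \<noteq> 0} = {}" if "k \<le> L - 1" for k
    using L that by force
  then show ?thesis unfolding psum_def by (intro exI[of _ "L - 1"]) simp
qed

lemma psum_above_support: "\<exists>H. \<forall>k \<ge> H. psum y i k = wt y i"
proof -
  obtain H where H: "\<And>j. y i j \<noteq> 0 \<Longrightarrow> j \<le> H"
    using bdd_above_finite[OF finite_support] unfolding bdd_above_def by auto
  have "{j. j \<le> k \<and> y i j \<noteq> 0} = {j. y i j \<noteq> 0}" if "H \<le> k" for k
    using H that by force
  then show ?thesis unfolding psum_def wt_def by (intro exI[of _ H]) simp
qed

lemma phi_nonneg: "0 \<le> phi y i"
proof -
  obtain L where "\<forall>k \<le> L. psum y i k = 0" using psum_below_support by blast
  then show ?thesis using psum_le_phi[of L] by simp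
qed

lemma wt_le_phi: "wt y i \<le> phi y i"
proof -
  obtain H where "\<forall>k \<ge> H. psum y i k = wt y i" using psum_above_support by blast
  then show ?thesis using psum_le_phi[of H] by simp
qed

lemma tail_eq_wt_minus_psum: "sum (y i) {j. k < j \<and> y i j \<noteq> 0} = wt y i - psum y i k"
proof -
  let ?A = "{j. j \<le> k \<and> y i j \<noteq> 0}" and ?B = "{j. k < j \<and> y i j \<noteq> 0}"
  have "finite ?A" "finite ?B" using finite_support by simp_all
  have "{j. y i j \<noteq> 0} = ?A \<union> ?B" by (rule set_eqI) (simp, linarith)
  then have "wt y i = sum (y i) (?A \<union> ?B)" unfolding wt_def by (simp only:)
  also have "\<dots> = psum y i k + sum (y i) ?B"
    unfolding psum_def by (rule sum.union_disjoint) (use \<open>finite ?A\<close> \<open>finite ?B\<close> in auto)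
  finally show ?thesis by simp
qed

lemma eps_eq_phi_minus_wt: "eps y i = phi y i - wt y i"
proof -
  have "range (\<lambda>k. - sum (y i) {j. k < j \<and> y i j \<noteq> 0}) = (\<lambda>v. v - wt y i) ` range (psum y i)"
    unfolding tail_eq_wt_minus_psum by auto
  then show ?thesis
    unfolding eps_def phi_def using finite_range_psum
    by (simp add: mono_Max_commute[symmetric] monoI)
qed

lemma eps_nonneg: "0 \<le> eps y i"
  using eps_eq_phi_minus_wt wt_le_phi by simp

lemma eps_pos_of_nonpos_tail:
  assumes "y i t < 0" and "\<And>b. t < b \<Longrightarrow> y i b \<le> 0"
  shows "0 < eps y i"
proof -
  let ?S = "{j. t - 1 < j \<and> y i j \<noteq> 0}"
  have "finite ?S" by (rule finite_subset[OF _ finite_support]) auto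
  moreover have "t \<in> ?S" using assms(1) by simp
  ultimately have "sum (y i) ?S = y i t + sum (y i) (?S - {t})"
    by (simp add: sum.remove)
  also have "sum (y i) (?S - {t}) \<le> 0"
    by (rule sum_nonpos) (use assms(2) in auto)
  finally have "sum (y i) ?S < 0" using assms(1) by simp
  then show ?thesis
    using tail_eq_wt_minus_psum[of "t - 1"] eps_eq_phi_minus_wt psum_le_phi[of "t - 1"] by simp
qed

lemma psum_step: "psum y i k = psum y i (k - 1) + y i k"
proof -
  have "{j. j \<le> k \<and> y i j \<noteq> 0} = {j. j \<le> k - 1 \<and> y i j \<noteq> 0} \<union> (if y i k \<noteq> 0 then {k} else {})"
    by (auto simp: zle_diff1_eq le_less)
  moreover have "finite {j. j \<le> k - 1 \<and> y i j \<noteq> 0}"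
    by (rule finite_subset[OF _ finite_support]) auto
  ultimately show ?thesis unfolding psum_def by (simp add: sum.insert_if)
qed

lemma nf_first_maximum:
  assumes "0 < phi y i"
  shows "psum y i (nf y i) = phi y i" and "\<And>j. j < nf y i \<Longrightarrow> psum y i j < phi y i"
proof -
  obtain L where L: "\<And>k. k \<le> L \<Longrightarrow> psum y i k = 0"
    using psum_below_support by blast
  have bdd: "L \<le> j" if "psum y i j = phi y i" for j
    using L[of j] assms that by linarith
  obtain k where "psum y i k = phi y i" using phi_attained .
  then obtain z where z: "psum y i z = phi y i" and min: "\<And>j. psum y i j = phi y i \<Longrightarrow> z \<le> j"
    using int_minimum_exists[where Q = "\<lambda>j. psum y i j = phi y i", OF _ bdd] by blast
  have less: "psum y i j < phi y i" if "j < z" for j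
    using min[of j] psum_le_phi[of j] that by linarith
  have "nf y i = z" by (rule nf_eqI[OF z less])
  then show "psum y i (nf y i) = phi y i" and "\<And>j. j < nf y i \<Longrightarrow> psum y i j < phi y i"
    using z less by blast+
qed

lemma pos_at_nf:
  assumes "0 < phi y i"
  shows "0 < y i (nf y i)"
  using nf_first_maximum(1)[OF assms] nf_first_maximum(2)[OF assms, of "nf y i - 1"]
    psum_step[of "nf y i"] by linarith

lemma ne_last_maximum:
  assumes "0 < eps y i"
  shows "psum y i (ne y i) = phi y i" and "\<And>j. ne y i < j \<Longrightarrow> psum y i j < phi y i"
proof -
  obtain H where H: "\<And>k. H \<le> k \<Longrightarrow> psum y i k = wt y i"
    using psum_above_support by blast
  have bdd: "j \<le> H" if "psum y i j = phi y i" for j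
    using H[of j] assms eps_eq_phi_minus_wt that by linarith
  obtain k where "psum y i k = phi y i" using phi_attained .
  then obtain z where z: "psum y i z = phi y i" and max: "\<And>j. psum y i j = phi y i \<Longrightarrow> j \<le> z"
    using int_maximum_exists[where Q = "\<lambda>j. psum y i j = phi y i", OF _ bdd] by blast
  have "ne y i = z"
    unfolding ne_def by (rule Greatest_equality) (use z max in auto)
  moreover have "psum y i j < phi y i" if "z < j" for j
    using max[of j] psum_le_phi[of j] that by linarith
  ultimately show "psum y i (ne y i) = phi y i" and "\<And>j. ne y i < j \<Longrightarrow> psum y i j < phi y i"
    using z by blast+
qed

lemma neg_after_ne:
  assumes "0 < eps y i"
  shows "y i (ne y i + 1) < 0"
  using ne_last_maximum(1)[OF assms] ne_last_maximum(2)[OF assms, of "ne y i + 1"]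
    psum_step[of "ne y i + 1"] by simp

end

lemma Amon_own_row:
  assumes "i \<in> {1..n}"
  shows "Amon n i t i b = (if b = t then 1 else 0) + (if b = t + 1 then 1 else 0)"
  using assms unfolding Amon_def mmul_def minv_def Ymon_def by auto

lemma psum_Amon_own_row:
  assumes "i \<in> {1..n}"
  shows "psum (Amon n i t) i k = (if t \<le> k then 1 else 0) + (if t + 1 \<le> k then 1 else 0)"
proof -
  have "psum (Amon n i t) i k = sum (Amon n i t i) {j \<in> {t, t + 1}. j \<le> k}"
    by (rule psum_eq_sum_superset) (use Amon_own_row[OF assms] in auto)
  moreover have "{j \<in> {t, t + 1}. j \<le> k} = (if t + 1 \<le> k then {t, t + 1} else if t \<le> k then {t} else {})"
    by auto
  ultimately show ?thesis using Amon_own_row[OF assms] by simp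
qed

lemma ftil_etil_inverse:
  assumes fin: "finite {b. y i b \<noteq> 0}" and i: "i \<in> {1..n}" and e: "etil n i y = Some y'"
  shows "ftil n i y' = Some y"
proof -
  define N where "N = ne y i"
  have eps: "0 < eps y i" and y': "y' = mmul (Amon n i N) y"
    using e eps_nonneg[of y i, OF fin] by (auto simp: etil_def N_def split: if_splits)
  have fin_A: "finite {b. Amon n i N i b \<noteq> 0}"
    by (rule finite_subset[of _ "{N, N + 1}"]) (use Amon_own_row[OF i] in auto)
  have fin': "finite {b. y' i b \<noteq> 0}"
    by (rule finite_subset[of _ "{b. Amon n i N i b \<noteq> 0} \<union> {b. y i b \<noteq> 0}"])
      (use fin fin_A in \<open>auto simp: y' mmul_def\<close>)
  have psum': "psum y' i k = psum y i k + (if N \<le> k then 1 else 0) + (if N + 1 \<le> k then 1 else 0)" for k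
    unfolding y' psum_mmul[of "Amon n i N" i y, OF fin_A fin] psum_Amon_own_row[OF i] by simp
  have at_N: "psum y i N = phi y i" and after_N: "\<And>k. N < k \<Longrightarrow> psum y i k < phi y i"
    using ne_last_maximum[of y i, OF fin eps] by (simp_all add: N_def)
  have phi': "phi y' i = phi y i + 1"
  proof (rule phi_eqI[of y' i, OF fin'])
    show "psum y' i k \<le> phi y i + 1" for k
      using psum'[of k] psum_le_phi[of y i k, OF fin] after_N[of k] by (cases "N < k") auto
    show "psum y' i N = phi y i + 1" using psum'[of N] at_N by simp
  qed
  have "nf y' i = N"
  proof (rule nf_eqI)
    show "psum y' i N = phi y' i" using psum'[of N] at_N phi' by simp
    show "psum y' i k < phi y' i" if "k < N" for k
      using psum'[of k] psum_le_phi[of y i k, OF fin] phi' that by simp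
  qed
  moreover have "phi y' i \<noteq> 0" using phi' phi_nonneg[of y i, OF fin] by simp
  moreover have "mmul (minv (Amon n i N)) y' = y"
    unfolding y' mmul_def minv_def by (simp add: fun_eq_iff)
  ultimately show ?thesis unfolding ftil_def by simp
qed

section \<open>Letters\<close>

text \<open>
  In the crystal 1 -> 2 -> ... -> n -> n-bar -> ... -> 1-bar of the vector representation the
  arrow x -> x+1 has colour color n x, and edge_time n x t is the spectral parameter s with
  X_{x+1}(t) = X_x(t) A_{color n x}(s)^{-1}.
\<close>

definition color :: "nat \<Rightarrow> nat \<Rightarrow> nat" where
  "color n x = (if x \<le> n then x else 2 * n - x)"

definition edge_time :: "nat \<Rightarrow> nat \<Rightarrow> int \<Rightarrow> int" where
  "edge_time n x t = (if x \<le> n then t else t + int x - int n)"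

definition arrow_sources :: "nat \<Rightarrow> nat \<Rightarrow> nat set" where
  "arrow_sources n i = {x \<in> {1..<2 * n}. color n x = i}"

lemma arrow_sources_eq:
  assumes "i \<in> {1..n}"
  shows "arrow_sources n i = (if i < n then {i, 2 * n - i} else {n})"
  using assms unfolding arrow_sources_def color_def by auto

lemma finite_arrow_sources: "finite (arrow_sources n i)"
  by (simp add: arrow_sources_def)

lemma arrow_sources_color:
  assumes "x \<in> {1..<2 * n}"
  shows "color n x \<in> {1..n}" and "x \<in> arrow_sources n (color n x)"
  using assms by (auto simp: color_def arrow_sources_def)

lemma Xlet_row:
  assumes i: "i \<in> {1..n}" and x: "x \<in> {1..2 * n}"
  shows "Xlet n x t i b = (\<Sum>a\<in>arrow_sources n i.
    (if x = a \<and> b = edge_time n a t then 1 else 0) - (if x = Suc a \<and> b = edge_time n a t + 1 then 1 else 0))"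
proof -
  have "Xlet n x t i b = (if x = i \<and> b = t then 1 else 0) - (if x = Suc i \<and> b = t + 1 then 1 else 0)
    + (if i < n \<and> x = 2 * n - i \<and> b = t + int n - int i then 1 else 0)
    - (if i < n \<and> x = Suc (2 * n - i) \<and> b = t + int n - int i + 1 then 1 else 0)"
  proof (cases "x \<le> n")
    case True
    have "(1 \<le> x \<and> x \<le> n \<and> i = x \<and> b = t) = (x = i \<and> b = t)"
      "(1 \<le> x - 1 \<and> x - 1 \<le> n \<and> i = x - 1 \<and> b = t + 1) = (x = Suc i \<and> b = t + 1)"
      "(i < n \<and> x = 2 * n - i \<and> b = t + int n - int i) = False"
      "(i < n \<and> x = Suc (2 * n - i) \<and> b = t + int n - int i + 1) = False"
      using i x True by auto
    then show ?thesis using True unfolding Xlet_def Xmon_def mmul_def minv_def Ymon_def by simp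
  next
    case False
    define c where "c = 2 * n + 1 - x"
    have c: "1 \<le> c" "c \<le> n" "x = 2 * n + 1 - c" "int c = 2 * int n + 1 - int x"
      using False x by (auto simp: c_def)
    have "(x = i \<and> b = t) = False"
      "(1 \<le> c - 1 \<and> c - 1 \<le> n \<and> i = c - 1 \<and> b = t + int n - int c + 1)
        = (i < n \<and> x = 2 * n - i \<and> b = t + int n - int i)"
      "(1 \<le> c \<and> c \<le> n \<and> i = c \<and> b = t + int n - int c + 1)
        = ((x = Suc i \<and> b = t + 1) \<or> (i < n \<and> x = Suc (2 * n - i) \<and> b = t + int n - int i + 1))"
      "\<not> ((x = Suc i \<and> b = t + 1) \<and> (i < n \<and> x = Suc (2 * n - i) \<and> b = t + int n - int i + 1))"
      using i x c False by auto
    moreover have "Xlet n x t = Xbar n c t" using False by (simp add: Xlet_def c_def)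
    ultimately show ?thesis unfolding Xbar_def mmul_def minv_def Ymon_def by auto
  qed
  moreover have "edge_time n i t = t" "i < n \<Longrightarrow> edge_time n (2 * n - i) t = t + int n - int i"
    using i by (auto simp: edge_time_def of_nat_diff)
  ultimately show ?thesis
    using i by (cases "i < n") (auto simp: arrow_sources_eq)
qed

lemma Xlet_Suc:
  assumes "x \<in> {1..<2 * n}"
  shows "Xlet n (Suc x) t = mmul (Xlet n x t) (minv (Amon n (color n x) (edge_time n x t)))"
proof -
  consider "x < n" | "x = n" | "n < x" by linarith
  then show ?thesis
  proof cases
    case 1
    then show ?thesis
      unfolding Xlet_def Xmon_def Amon_def color_def edge_time_def mmul_def minv_def
      by (simp add: fun_eq_iff algebra_simps)
  next
    case 2
    then show ?thesis
      unfolding Xlet_def Xmon_def Xbar_def Amon_def color_def edge_time_def mmul_def minv_def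
      by (simp add: fun_eq_iff algebra_simps)
  next
    case 3
    define i where "i = 2 * n - x"
    have i: "1 \<le> i" "i < n" "x = 2 * n - i" "2 * n + 1 - Suc x = i" "2 * n + 1 - x = Suc i"
      using 3 assms by (auto simp: i_def)
    have "int x - int n = int n - int i" using i by linarith
    then show ?thesis using 3 i
      unfolding Xlet_def Xbar_def Amon_def color_def edge_time_def mmul_def minv_def
      by (simp add: fun_eq_iff algebra_simps)
  qed
qed

section \<open>Column monomials\<close>

definition column_word :: "nat \<Rightarrow> nat \<Rightarrow> (nat \<Rightarrow> nat) \<Rightarrow> bool" where
  "column_word n k w \<longleftrightarrow> strict_mono_on {1..k} w \<and> (\<forall>j\<in>{1..k}. w j \<in> {1..2 * n})"

definition column :: "nat \<Rightarrow> nat \<Rightarrow> int \<Rightarrow> (nat \<Rightarrow> nat) \<Rightarrow> mono" where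
  "column n k m w = (\<lambda>a b. \<Sum>j\<in>{1..k}. Xlet n (w j) (int k + m - int j) a b)"

lemma Mk_eq_columns: "Mk n k m = {column n k m w | w. column_word n k w}"
  by (simp add: Mk_def column_def column_word_def)

lemma column_word_less:
  assumes "column_word n k w" "j \<in> {1..k}" "j' \<in> {1..k}"
  shows "w j < w j' \<longleftrightarrow> j < j'"
  using assms unfolding column_word_def
  by (metis linorder_neqE_nat not_less_iff_gr_or_eq strict_mono_onD)

lemma column_word_inj: "column_word n k w \<Longrightarrow> inj_on w {1..k}"
  unfolding column_word_def using strict_mono_on_imp_inj_on by blast

lemma column_word_letter: "column_word n k w \<Longrightarrow> j \<in> {1..k} \<Longrightarrow> w j \<in> {1..2 * n}"
  unfolding column_word_def by blast

lemma column_word_Suc_letter: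
  assumes w: "column_word n k w" and j: "j \<in> {1..k}" "j' \<in> {1..k}" and "w j = x" "w j' = Suc x"
  shows "j' = Suc j"
proof (rule ccontr)
  assume "j' \<noteq> Suc j"
  moreover have "j < j'" using column_word_less[OF w j] assms by simp
  ultimately have "Suc j \<in> {1..k}" "Suc j < j'" using j by auto
  then have "x < w (Suc j)" "w (Suc j) < Suc x"
    using column_word_less[OF w] j assms by (metis lessI)+
  then show False by simp
qed

lemma sum_indicator_inj_on:
  assumes "inj_on w A" and "finite A"
  shows "(\<Sum>j\<in>A. if w j = x \<and> P j then 1 else 0) = (if \<exists>j\<in>A. w j = x \<and> P j then 1 else (0::int))"
proof (cases "\<exists>j\<in>A. w j = x \<and> P j")
  case True
  then obtain j0 where j0: "j0 \<in> A" "w j0 = x" "P j0" by blast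
  then have "(\<Sum>j\<in>A. if w j = x \<and> P j then 1 else (0::int)) = (\<Sum>j\<in>A. if j = j0 then 1 else 0)"
    using assms(1) by (intro sum.cong) (auto dest: inj_onD)
  then show ?thesis using True j0 assms(2) by simp
next
  case False
  then show ?thesis by (intro trans[OF sum.neutral]) auto
qed

text \<open>
  Contribution of the letters x and x+1 to row color n x of a column.  If both occur, they sit at
  adjacent positions and cancel, so this is always concentrated at a single time.
\<close>

definition pair_row :: "nat \<Rightarrow> nat \<Rightarrow> int \<Rightarrow> (nat \<Rightarrow> nat) \<Rightarrow> nat \<Rightarrow> int \<Rightarrow> int" where
  "pair_row n k m w x b =
     (if \<exists>j\<in>{1..k}. w j = x \<and> b = edge_time n x (int k + m - int j) then 1 else 0)
   - (if \<exists>j\<in>{1..k}. w j = Suc x \<and> b = edge_time n x (int k + m - int j) + 1 then 1 else 0)"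

lemma column_row:
  assumes w: "column_word n k w" and i: "i \<in> {1..n}"
  shows "column n k m w i b = (\<Sum>x\<in>arrow_sources n i. pair_row n k m w x b)"
proof -
  let ?t = "\<lambda>j. int k + m - int j"
  have "column n k m w i b = (\<Sum>j\<in>{1..k}. \<Sum>x\<in>arrow_sources n i.
      (if w j = x \<and> b = edge_time n x (?t j) then 1 else 0)
    - (if w j = Suc x \<and> b = edge_time n x (?t j) + 1 then 1 else 0))"
    unfolding column_def using Xlet_row[OF i column_word_letter[OF w]] by simp
  also have "\<dots> = (\<Sum>x\<in>arrow_sources n i.
      (\<Sum>j\<in>{1..k}. if w j = x \<and> b = edge_time n x (?t j) then 1 else 0)
    - (\<Sum>j\<in>{1..k}. if w j = Suc x \<and> b = edge_time n x (?t j) + 1 then 1 else 0))"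
    by (subst sum.swap) (simp add: sum_subtractf)
  also have "\<dots> = (\<Sum>x\<in>arrow_sources n i. pair_row n k m w x b)"
    unfolding pair_row_def sum_indicator_inj_on[OF column_word_inj[OF w] finite_atLeastAtMost] ..
  finally show ?thesis .
qed

lemma column_outside_rows:
  assumes "a = 0 \<or> n < a"
  shows "column n k m w a b = 0"
proof -
  have "Ymon n j s a b = 0" for j s
    using assms unfolding Ymon_def by auto
  then have "Xlet n x t a b = 0" for x t
    unfolding Xlet_def Xmon_def Xbar_def mmul_def minv_def by simp
  then show ?thesis unfolding column_def by simp
qed

lemma finite_support_column_row:
  assumes w: "column_word n k w" and i: "i \<in> {1..n}"
  shows "finite {b. column n k m w i b \<noteq> 0}"
proof (rule finite_subset)
  let ?e = "\<lambda>x j. edge_time n x (int k + m - int j)"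
  show "{b. column n k m w i b \<noteq> 0} \<subseteq> (\<Union>x\<in>arrow_sources n i. \<Union>j\<in>{1..k}. {?e x j, ?e x j + 1})"
  proof
    fix b assume "b \<in> {b. column n k m w i b \<noteq> 0}"
    then obtain x where "x \<in> arrow_sources n i" "pair_row n k m w x b \<noteq> 0"
      unfolding column_row[OF w i] by (meson mem_Collect_eq sum.neutral)
    then show "b \<in> (\<Union>x\<in>arrow_sources n i. \<Union>j\<in>{1..k}. {?e x j, ?e x j + 1})"
      unfolding pair_row_def by (auto split: if_splits)
  qed
  show "finite (\<Union>x\<in>arrow_sources n i. \<Union>j\<in>{1..k}. {?e x j, ?e x j + 1})"
    by (simp add: arrow_sources_def)
qed

lemma pair_row_pos:
  assumes w: "column_word n k w" and "0 < pair_row n k m w x b"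
  shows "\<exists>j\<in>{1..k}. w j = x \<and> b = edge_time n x (int k + m - int j) \<and> (\<forall>j'\<in>{1..k}. w j' \<noteq> Suc x)"
proof -
  obtain j where j: "j \<in> {1..k}" "w j = x" "b = edge_time n x (int k + m - int j)"
    and none: "\<not> (\<exists>j'\<in>{1..k}. w j' = Suc x \<and> b = edge_time n x (int k + m - int j') + 1)"
    using assms(2) unfolding pair_row_def by (auto split: if_splits)
  have "w j' \<noteq> Suc x" if "j' \<in> {1..k}" for j'
  proof
    assume "w j' = Suc x"
    then have "j' = Suc j" using column_word_Suc_letter[OF w j(1) that j(2)] by simp
    then have "b = edge_time n x (int k + m - int j') + 1"
      using j(3) by (simp add: edge_time_def)
    then show False using none that \<open>w j' = Suc x\<close> by blast
  qed
  then show ?thesis using j by blast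
qed

lemma pair_row_neg:
  assumes w: "column_word n k w" and "pair_row n k m w x b < 0"
  shows "\<exists>j\<in>{1..k}. w j = Suc x \<and> b = edge_time n x (int k + m - int j) + 1 \<and> (\<forall>j'\<in>{1..k}. w j' \<noteq> x)"
proof -
  obtain j where j: "j \<in> {1..k}" "w j = Suc x" "b = edge_time n x (int k + m - int j) + 1"
    and none: "\<not> (\<exists>j'\<in>{1..k}. w j' = x \<and> b = edge_time n x (int k + m - int j'))"
    using assms(2) unfolding pair_row_def by (auto split: if_splits)
  have "w j' \<noteq> x" if "j' \<in> {1..k}" for j'
  proof
    assume "w j' = x"
    then have "j = Suc j'" using column_word_Suc_letter[OF w that j(1)] j(2) by simp
    then have "b = edge_time n x (int k + m - int j')"
      using j(3) by (simp add: edge_time_def)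
    then show False using none that \<open>w j' = x\<close> by blast
  qed
  then show ?thesis using j by blast
qed

lemma pair_row_unmatched_source:
  assumes w: "column_word n k w" and j: "j \<in> {1..k}" "w j = x" and "\<forall>j'\<in>{1..k}. w j' \<noteq> Suc x"
  shows "pair_row n k m w x b = (if b = edge_time n x (int k + m - int j) then 1 else 0)"
proof -
  have "(\<exists>j'\<in>{1..k}. w j' = x \<and> b = edge_time n x (int k + m - int j'))
      \<longleftrightarrow> b = edge_time n x (int k + m - int j)"
    using j inj_onD[OF column_word_inj[OF w]] by metis
  then show ?thesis unfolding pair_row_def using assms(4) by auto
qed

lemma pair_row_unmatched_target:
  assumes w: "column_word n k w" and j: "j \<in> {1..k}" "w j = Suc x" and "\<forall>j'\<in>{1..k}. w j' \<noteq> x"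
  shows "pair_row n k m w x b = (if b = edge_time n x (int k + m - int j) + 1 then -1 else 0)"
proof -
  have "(\<exists>j'\<in>{1..k}. w j' = Suc x \<and> b = edge_time n x (int k + m - int j') + 1)
      \<longleftrightarrow> b = edge_time n x (int k + m - int j) + 1"
    using j inj_onD[OF column_word_inj[OF w]] by metis
  then show ?thesis unfolding pair_row_def using assms(4) by auto
qed

lemma sum_fun_upd:
  fixes g :: "'b \<Rightarrow> 'a \<Rightarrow> 'c::comm_monoid_add"
  assumes "finite A" and "a \<in> A"
  shows "(\<Sum>j\<in>A. g ((w(a := v)) j) j) + g (w a) a = (\<Sum>j\<in>A. g (w j) j) + g v a"
proof -
  have "(\<Sum>j\<in>A - {a}. g ((w(a := v)) j) j) = (\<Sum>j\<in>A - {a}. g (w j) j)"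
    by (rule sum.cong) auto
  then show ?thesis
    using sum.remove[OF assms, of "\<lambda>j. g ((w(a := v)) j) j"] sum.remove[OF assms, of "\<lambda>j. g (w j) j"]
    by (simp add: ac_simps)
qed

lemma column_fun_upd:
  assumes "j \<in> {1..k}"
  shows "column n k m (w(j := v)) a b
    = column n k m w a b - Xlet n (w j) (int k + m - int j) a b + Xlet n v (int k + m - int j) a b"
  using sum_fun_upd[OF finite_atLeastAtMost assms, of "\<lambda>x j. Xlet n x (int k + m - int j) a b" w v]
  unfolding column_def by (simp add: algebra_simps)

definition letter_sum :: "nat \<Rightarrow> (nat \<Rightarrow> nat) \<Rightarrow> nat" where
  "letter_sum k w = (\<Sum>j\<in>{1..k}. w j)"

lemma column_word_fun_upd:
  assumes w: "column_word n k w" and j: "j \<in> {1..k}" and v: "v \<in> {1..2 * n}"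
    and below: "\<And>j'. j' \<in> {1..k} \<Longrightarrow> j' < j \<Longrightarrow> w j' < v"
    and above: "\<And>j'. j' \<in> {1..k} \<Longrightarrow> j < j' \<Longrightarrow> v < w j'"
  shows "column_word n k (w(j := v))"
  unfolding column_word_def
proof (intro conjI ballI strict_mono_onI)
  fix r s assume rs: "r \<in> {1..k}" "s \<in> {1..k}" "r < s"
  then show "(w(j := v)) r < (w(j := v)) s"
    using below above column_word_less[OF w rs(1,2)] by auto
qed (use w v in \<open>auto simp: column_word_def\<close>)

lemma column_raise:
  assumes w: "column_word n k w" and j: "j \<in> {1..k}" "w j = x" and x: "x < 2 * n"
    and absent: "\<forall>j'\<in>{1..k}. w j' \<noteq> Suc x"
  shows "column_word n k (w(j := Suc x))"
    and "column n k m (w(j := Suc x))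
      = mmul (column n k m w) (minv (Amon n (color n x) (edge_time n x (int k + m - int j))))"
proof -
  have "x \<in> {1..<2 * n}" using column_word_letter[OF w j(1)] j(2) x by simp
  show "column_word n k (w(j := Suc x))"
  proof (rule column_word_fun_upd[OF w j(1)])
    fix j' assume j': "j' \<in> {1..k}"
    show "j' < j \<Longrightarrow> w j' < Suc x" using column_word_less[OF w j' j(1)] j(2) by simp
    show "j < j' \<Longrightarrow> Suc x < w j'"
      using column_word_less[OF w j(1) j'] j(2) absent j' by (metis Suc_lessI)
  qed (use \<open>x \<in> {1..<2 * n}\<close> in simp)
  show "column n k m (w(j := Suc x))
      = mmul (column n k m w) (minv (Amon n (color n x) (edge_time n x (int k + m - int j))))"
    unfolding fun_eq_iff column_fun_upd[OF j(1)] Xlet_Suc[OF \<open>x \<in> {1..<2 * n}\<close>] j(2)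
    by (simp add: mmul_def minv_def)
qed

lemma column_lower:
  assumes w: "column_word n k w" and j: "j \<in> {1..k}" "w j = Suc x" and x: "1 \<le> x"
    and absent: "\<forall>j'\<in>{1..k}. w j' \<noteq> x"
  shows "column_word n k (w(j := x))"
    and "letter_sum k (w(j := x)) < letter_sum k w"
    and "column n k m (w(j := x))
      = mmul (column n k m w) (Amon n (color n x) (edge_time n x (int k + m - int j)))"
proof -
  have "x \<in> {1..<2 * n}" using column_word_letter[OF w j(1)] j(2) x by simp
  show "column_word n k (w(j := x))"
  proof (rule column_word_fun_upd[OF w j(1)])
    fix j' assume j': "j' \<in> {1..k}"
    show "j' < j \<Longrightarrow> w j' < x"
      using column_word_less[OF w j' j(1)] j(2) absent j' by (metis less_SucE)
    show "j < j' \<Longrightarrow> x < w j'" using column_word_less[OF w j(1) j'] j(2) by simp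
  qed (use \<open>x \<in> {1..<2 * n}\<close> in simp)
  show "letter_sum k (w(j := x)) < letter_sum k w"
    using sum_fun_upd[OF finite_atLeastAtMost j(1), of "\<lambda>x j. x" w x] j(2)
    unfolding letter_sum_def by simp
  show "column n k m (w(j := x))
      = mmul (column n k m w) (Amon n (color n x) (edge_time n x (int k + m - int j)))"
    unfolding fun_eq_iff column_fun_upd[OF j(1)] Xlet_Suc[OF \<open>x \<in> {1..<2 * n}\<close>] j(2)
    by (simp add: mmul_def minv_def)
qed

lemma ftil_column:
  assumes w: "column_word n k w" and i: "i \<in> {1..n}" and f: "ftil n i (column n k m w) = Some M'"
  shows "\<exists>w'. column_word n k w' \<and> M' = column n k m w'"
proof -
  define y where "y = column n k m w"
  have fin: "finite {b. y i b \<noteq> 0}" unfolding y_def by (rule finite_support_column_row[OF w i])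
  have "0 < phi y i" and M': "M' = mmul (minv (Amon n i (nf y i))) y"
    using f phi_nonneg[of y i, OF fin] unfolding ftil_def y_def by (auto split: if_splits)
  then have "0 < (\<Sum>x\<in>arrow_sources n i. pair_row n k m w x (nf y i))"
    using pos_at_nf[of y i, OF fin] column_row[OF w i] unfolding y_def by simp
  then obtain x where x: "x \<in> arrow_sources n i" and "0 < pair_row n k m w x (nf y i)"
    by (metis not_le sum_nonpos)
  then obtain j where j: "j \<in> {1..k}" "w j = x" "nf y i = edge_time n x (int k + m - int j)"
    and absent: "\<forall>j'\<in>{1..k}. w j' \<noteq> Suc x"
    using pair_row_pos[OF w] by blast
  have "color n x = i" "x < 2 * n" using x by (auto simp: arrow_sources_def)
  then have "column_word n k (w(j := Suc x))" "column n k m (w(j := Suc x)) = M'"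
    using column_raise(1)[OF w j(1,2) _ absent] column_raise(2)[OF w j(1,2) _ absent, of m] j(3) M'
    unfolding y_def
    by (auto simp: mmul_def minv_def fun_eq_iff)
  then show ?thesis by metis
qed

lemma etil_column:
  assumes w: "column_word n k w" and i: "i \<in> {1..n}" and e: "etil n i (column n k m w) = Some M'"
  shows "\<exists>w'. column_word n k w' \<and> letter_sum k w' < letter_sum k w \<and> M' = column n k m w'"
proof -
  define y where "y = column n k m w"
  have fin: "finite {b. y i b \<noteq> 0}" unfolding y_def by (rule finite_support_column_row[OF w i])
  have "0 < eps y i" and M': "M' = mmul (Amon n i (ne y i)) y"
    using e eps_nonneg[of y i, OF fin] unfolding etil_def y_def by (auto split: if_splits)
  then have "(\<Sum>x\<in>arrow_sources n i. pair_row n k m w x (ne y i + 1)) < 0"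
    using neg_after_ne[of y i, OF fin] column_row[OF w i] unfolding y_def by simp
  then obtain x where x: "x \<in> arrow_sources n i" and "pair_row n k m w x (ne y i + 1) < 0"
    by (metis not_le sum_nonneg)
  then obtain j where j: "j \<in> {1..k}" "w j = Suc x" "ne y i = edge_time n x (int k + m - int j)"
    and absent: "\<forall>j'\<in>{1..k}. w j' \<noteq> x"
    using pair_row_neg[OF w] by force
  have "color n x = i" "1 \<le> x" using x by (auto simp: arrow_sources_def)
  then have "column_word n k (w(j := x))" "letter_sum k (w(j := x)) < letter_sum k w"
    "column n k m (w(j := x)) = M'"
    using column_lower(1,2)[OF w j(1,2) _ absent] column_lower(3)[OF w j(1,2) _ absent, of m] j(3) M'
    unfolding y_def
    by (auto simp: mmul_def fun_eq_iff)
  then show ?thesis by metis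
qed

section \<open>Only the identity column is highest weight\<close>

lemma eps_column_pos_of_unmatched_target:
  assumes w: "column_word n k w" and jd: "jd \<in> {1..k}" "w jd = Suc x" and x: "x \<in> {1..<2 * n}"
    and absent: "\<forall>j\<in>{1..k}. w j \<noteq> x"
    and partner: "\<And>x' j. x' \<in> arrow_sources n (color n x) \<Longrightarrow> x' \<noteq> x \<Longrightarrow> j \<in> {1..k} \<Longrightarrow> w j = x'
      \<Longrightarrow> \<forall>j'\<in>{1..k}. w j' \<noteq> Suc x'
      \<Longrightarrow> edge_time n x' (int k + m - int j) \<le> edge_time n x (int k + m - int jd)"
  shows "0 < eps (column n k m w) (color n x)"
proof -
  let ?i = "color n x" and ?t = "edge_time n x (int k + m - int jd) + 1"
  have i: "?i \<in> {1..n}" and src: "x \<in> arrow_sources n ?i" using arrow_sources_color[OF x] by simp_all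
  have own: "pair_row n k m w x b = (if b = ?t then -1 else 0)" for b
    by (rule pair_row_unmatched_target[OF w jd absent])
  have other: "pair_row n k m w x' b \<le> 0" if x': "x' \<in> arrow_sources n ?i" "x' \<noteq> x" and "?t \<le> b" for x' b
  proof (cases "\<exists>j\<in>{1..k}. w j = x' \<and> (\<forall>j'\<in>{1..k}. w j' \<noteq> Suc x')")
    case True
    then obtain j where j: "j \<in> {1..k}" "w j = x'" and absent': "\<forall>j'\<in>{1..k}. w j' \<noteq> Suc x'" by blast
    show ?thesis
      using pair_row_unmatched_source[OF w j absent', of m b] partner[OF x' j absent'] \<open>?t \<le> b\<close> by simp
  next
    case False
    then show ?thesis using pair_row_pos[OF w] by (meson not_le)
  qed
  have row: "column n k m w ?i b = pair_row n k m w x b + (\<Sum>x'\<in>arrow_sources n ?i - {x}. pair_row n k m w x' b)"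
    for b
    unfolding column_row[OF w i] by (rule sum.remove[OF finite_arrow_sources src])
  show ?thesis
  proof (rule eps_pos_of_nonpos_tail[of "column n k m w" ?i, OF finite_support_column_row[OF w i]])
    have rest: "(\<Sum>x'\<in>arrow_sources n ?i - {x}. pair_row n k m w x' b) \<le> 0" if "?t \<le> b" for b
      by (rule sum_nonpos) (use other that in blast)
    show "column n k m w ?i ?t < 0"
      using row[of ?t] own[of ?t] rest[of ?t] by simp
    show "column n k m w ?i b \<le> 0" if "?t < b" for b
      using row[of b] own[of b] rest[of b] that by simp
  qed
qed

lemma column_word_first_gap:
  assumes w: "column_word n k w" and "\<exists>j\<in>{1..k}. w j \<noteq> j"
  obtains j0 a where "j0 \<in> {1..k}" "w j0 = Suc a" "j0 \<le> a" "\<forall>j\<in>{1..k}. w j \<noteq> a"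
    and "\<And>j. j \<in> {1..k} \<Longrightarrow> j < j0 \<Longrightarrow> w j = j"
proof -
  define j0 where "j0 = (LEAST j. j \<in> {1..k} \<and> w j \<noteq> j)"
  have "j0 \<in> {1..k} \<and> w j0 \<noteq> j0"
    unfolding j0_def by (rule LeastI_ex) (use assms(2) in blast)
  then have j0: "j0 \<in> {1..k}" "w j0 \<noteq> j0" by simp_all
  have fixed: "w j = j" if "j \<in> {1..k}" "j < j0" for j
    using not_less_Least[of j "\<lambda>j. j \<in> {1..k} \<and> w j \<noteq> j"] that unfolding j0_def by blast
  have "j0 \<le> w j0"
  proof (cases "j0 = 1")
    case False
    then have "j0 - 1 \<in> {1..k}" "w (j0 - 1) = j0 - 1" using j0(1) fixed by auto
    then show ?thesis using column_word_less[OF w _ j0(1), of "j0 - 1"] False j0(1) by simp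
  qed (use column_word_letter[OF w j0(1)] in simp)
  then obtain a where a: "w j0 = Suc a" "j0 \<le> a" using j0(2) by (cases "w j0") auto
  have "w j \<noteq> a" if "j \<in> {1..k}" for j
  proof (cases "j < j0")
    case True then show ?thesis using fixed[OF that] a by simp
  next
    case False then show ?thesis using column_word_less[OF w j0(1) that] a by (cases "j = j0") auto
  qed
  then show thesis using that j0(1) a fixed by blast
qed

lemma column_word_run_start:
  assumes w: "column_word n k w" and j0: "j0 \<in> {1..k}" and jb: "jb \<in> {1..k}" "j0 < jb"
    and gap: "w j0 + (jb - j0) < w jb"
  obtains jl where "j0 < jl" "jl \<le> jb" "w jl + (jb - jl) = w jb" "\<forall>j\<in>{1..k}. w j \<noteq> w jl - 1"
proof -
  let ?P = "\<lambda>j. j0 < j \<and> j \<le> jb \<and> w j + (jb - j) = w jb"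
  define jl where "jl = (LEAST j. ?P j)"
  have Pjl: "?P jl" using LeastI[of ?P jb] jb(2) unfolding jl_def by simp
  have jl: "jl \<in> {1..k}" using Pjl j0 jb by auto
  have "w j \<noteq> w jl - 1" if j: "j \<in> {1..k}" for j
  proof
    assume "w j = w jl - 1"
    moreover have pos: "w jl = Suc (w jl - 1)" using column_word_letter[OF w jl] by simp
    ultimately have "jl = Suc j" using column_word_Suc_letter[OF w j jl] by simp
    moreover have "w j + (jb - j) = w jb" using Pjl \<open>w j = w jl - 1\<close> pos calculation by arith
    ultimately show False
      using Pjl gap Least_le[of ?P j] unfolding jl_def[symmetric] by (cases "j = j0") auto
  qed
  then show thesis using that Pjl by blast
qed

text \<open>
  In row a, the +1 of the letter 2n-a (the bar of a+1) comes after the -1 of the letter a+1 and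
  cancels it.  The block of consecutive letters ending at 2n-a then starts with a letter x+1
  with x > n missing, and the -1 of this letter is unmatched in row 2n-x.
\<close>

lemma eps_column_pos_of_close_bar_partner:
  assumes w: "column_word n k w" and j0: "j0 \<in> {1..k}" "w j0 = Suc a" and a: "a < n"
    and jb: "jb \<in> {1..k}" "w jb = 2 * n - a" and close: "jb + a < j0 + n"
  shows "\<exists>i\<in>{1..n}. 0 < eps (column n k m w) i"
proof -
  have "w j0 < w jb" using j0(2) jb(2) a by linarith
  then have "j0 < jb" using column_word_less[OF w j0(1) jb(1)] by simp
  moreover have "w j0 + (jb - j0) < w jb" using j0(2) jb(2) close a by simp
  ultimately obtain jl where jl: "j0 < jl" "jl \<le> jb" "w jl + (jb - jl) = w jb"
    and absent: "\<forall>j\<in>{1..k}. w j \<noteq> w jl - 1"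
    using column_word_run_start[OF w j0(1) jb(1)] by blast
  define x where "x = w jl - 1"
  have jl_k: "jl \<in> {1..k}" using jl jb(1) j0(1) by auto
  have x: "w jl = Suc x" "n < x" "x < 2 * n" using jl jb(2) close a unfolding x_def by auto
  have "0 < eps (column n k m w) (color n x)"
  proof (rule eps_column_pos_of_unmatched_target[OF w jl_k x(1) _ absent[folded x_def]])
    show "x \<in> {1..<2 * n}" using x by simp
    fix x' j assume x': "x' \<in> arrow_sources n (color n x)" "x' \<noteq> x" and j: "j \<in> {1..k}" "w j = x'"
    have "x' = 2 * n - x" using x' x by (auto simp: arrow_sources_def color_def split: if_splits)
    then have "w j0 \<le> w j" using x jl j(2) jb(2) j0(2) by arith
    then have "j0 \<le> j" using column_word_less[OF w j(1) j0(1)] by linarith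
    then have "jl + n \<le> j + x" using x jl jb(2) close by arith
    then show "edge_time n x' (int k + m - int j) \<le> edge_time n x (int k + m - int jl)"
      using \<open>x' = 2 * n - x\<close> x by (simp add: edge_time_def)
  qed
  then show ?thesis using arrow_sources_color(1)[of x n] x by auto
qed

lemma column_not_highest_weight:
  assumes w: "column_word n k w" and "\<exists>j\<in>{1..k}. w j \<noteq> j"
  shows "\<exists>i\<in>{1..n}. 0 < eps (column n k m w) i"
proof -
  obtain j0 a where j0: "j0 \<in> {1..k}" "w j0 = Suc a" "j0 \<le> a" and absent: "\<forall>j\<in>{1..k}. w j \<noteq> a"
    and fixed: "\<And>j. j \<in> {1..k} \<Longrightarrow> j < j0 \<Longrightarrow> w j = j"
    using column_word_first_gap[OF assms] by blast
  have a: "a \<in> {1..<2 * n}" using column_word_letter[OF w j0(1)] j0 by auto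
  let ?e = "\<lambda>x j. edge_time n x (int k + m - int j)"
  have descent: "\<exists>i\<in>{1..n}. 0 < eps (column n k m w) i"
    if "\<And>x' j. x' \<in> arrow_sources n (color n a) \<Longrightarrow> x' \<noteq> a \<Longrightarrow> j \<in> {1..k} \<Longrightarrow> w j = x'
      \<Longrightarrow> \<forall>j'\<in>{1..k}. w j' \<noteq> Suc x' \<Longrightarrow> ?e x' j \<le> ?e a j0"
    using eps_column_pos_of_unmatched_target[OF w j0(1,2) a absent that] arrow_sources_color(1)[OF a]
    by blast
  consider "a = n" | "n < a" | "a < n" by linarith
  then show ?thesis
  proof cases
    case 1
    then have "arrow_sources n (color n a) = {a}"
      using a arrow_sources_eq[of n n] by (simp add: color_def)
    then show ?thesis by (intro descent) auto
  next
    case 2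
    show ?thesis
    proof (rule descent)
      fix x' j assume x': "x' \<in> arrow_sources n (color n a)" "x' \<noteq> a" and j: "j \<in> {1..k}" "w j = x'"
        and absent': "\<forall>j'\<in>{1..k}. w j' \<noteq> Suc x'"
      have "x' = 2 * n - a" using x' 2 by (auto simp: arrow_sources_def color_def split: if_splits)
      then have "w j < w j0" using j(2) j0(2) 2 by linarith
      then have "j < j0" using column_word_less[OF w j(1) j0(1)] by simp
      then have "j = x'" using fixed[OF j(1)] j(2) by simp
      have "j0 \<le> Suc j"
      proof (rule ccontr)
        assume "\<not> j0 \<le> Suc j"
        then show False using fixed[of "Suc j"] absent' j0(1) \<open>j = x'\<close> by auto
      qed
      then show "?e x' j \<le> ?e a j0" using \<open>x' = 2 * n - a\<close> 2 by (simp add: edge_time_def)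
    qed
  next
    case 3
    show ?thesis
    proof (cases "\<exists>jb\<in>{1..k}. w jb = 2 * n - a \<and> jb + a < j0 + n")
      case True
      then show ?thesis using eps_column_pos_of_close_bar_partner[OF w j0(1,2) 3] by blast
    next
      case False
      show ?thesis
      proof (rule descent)
        fix x' j assume x': "x' \<in> arrow_sources n (color n a)" "x' \<noteq> a" and j: "j \<in> {1..k}" "w j = x'"
        have "x' = 2 * n - a" using x' 3 by (auto simp: arrow_sources_def color_def split: if_splits)
        then show "?e x' j \<le> ?e a j0" using False j 3 by (force simp: edge_time_def)
      qed
    qed
  qed
qed

section \<open>The crystal M_k(m)\<close>

lemma pair_row_identity:
  assumes "1 \<le> x"
  shows "pair_row n k m (\<lambda>j. j) x b = (if x = k \<and> b = edge_time n x m then 1 else 0)"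
proof -
  have "(\<exists>j\<in>{1..k}. j = x \<and> b = edge_time n x (int k + m - int j))
      \<longleftrightarrow> x \<le> k \<and> b = edge_time n x (int k + m - int x)"
    using assms by auto
  moreover have "(\<exists>j\<in>{1..k}. j = Suc x \<and> b = edge_time n x (int k + m - int j) + 1)
      \<longleftrightarrow> x < k \<and> b = edge_time n x (int k + m - int x)"
    by (auto simp: edge_time_def)
  ultimately show ?thesis unfolding pair_row_def by (auto simp: edge_time_def)
qed

lemma column_identity:
  assumes "k \<le> 2 * n"
  shows "column n k m (\<lambda>j. j) = (if k \<le> n then Ymon n k m else Ymon n (2 * n - k) (m - int n + int k))"
proof (intro ext)
  fix a b
  show "column n k m (\<lambda>j. j) a b = (if k \<le> n then Ymon n k m else Ymon n (2 * n - k) (m - int n + int k)) a b"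
  proof (cases "a \<in> {1..n}")
    case True
    have w: "column_word n k (\<lambda>j. j)" using assms by (simp add: column_word_def strict_mono_on_def)
    have "column n k m (\<lambda>j. j) a b
        = (\<Sum>x\<in>arrow_sources n a. if x = k then (if b = edge_time n x m then 1 else 0) else 0)"
      unfolding column_row[OF w True] by (intro sum.cong) (auto simp: pair_row_identity arrow_sources_def)
    also have "\<dots> = (if k \<in> arrow_sources n a \<and> b = edge_time n k m then 1 else 0)"
      by (simp add: finite_arrow_sources)
    finally show ?thesis
      using True assms by (auto simp: arrow_sources_def color_def edge_time_def Ymon_def)
  next
    case False
    then show ?thesis using column_outside_rows[of a n] by (auto simp: Ymon_def)
  qed
qed

lemma component_subset_columns:
  assumes "k \<le> 2 * n" and "M \<in> component n (column n k m (\<lambda>j. j))"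
  shows "M \<in> Mk n k m"
  using assms(2)
proof (induction rule: component.induct)
  case base
  have "column_word n k (\<lambda>j. j)" using assms(1) by (simp add: column_word_def strict_mono_on_def)
  then show ?case unfolding Mk_eq_columns by blast
next
  case (fstep M i M')
  then show ?case unfolding Mk_eq_columns using ftil_column by blast
next
  case (estep M i M')
  then show ?case unfolding Mk_eq_columns using etil_column by blast
qed

lemma column_in_component:
  assumes "column_word n k w"
  shows "column n k m w \<in> component n (column n k m (\<lambda>j. j))"
  using assms
proof (induction "letter_sum k w" arbitrary: w rule: less_induct)
  case less
  show ?case
  proof (cases "\<forall>j\<in>{1..k}. w j = j")
    case True
    then have "column n k m w = column n k m (\<lambda>j. j)" unfolding column_def by simp
    then show ?thesis using component.base by simp
  next
    case False
    obtain i where i: "i \<in> {1..n}" and "0 < eps (column n k m w) i"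
      using column_not_highest_weight[OF less.prems] False by blast
    then obtain y' where e: "etil n i (column n k m w) = Some y'" by (simp add: etil_def)
    then obtain w' where w': "column_word n k w'" "letter_sum k w' < letter_sum k w"
      and "y' = column n k m w'"
      using etil_column[OF less.prems i] by blast
    moreover have "ftil n i y' = Some (column n k m w)"
      by (rule ftil_etil_inverse[OF finite_support_column_row[OF less.prems i] i e])
    ultimately show ?thesis using component.fstep[OF less.hyps[OF w'(2,1)] i] by blast
  qed
qed

lemma Mk_eq_component:
  assumes "k \<le> 2 * n"
  shows "Mk n k m = component n (column n k m (\<lambda>j. j))"
  using component_subset_columns[OF assms] column_in_component unfolding Mk_eq_columns by blast

lemma crystal_iso_refl:
  assumes "closed_sub n S"
  shows "crystal_iso n S S"
  unfolding crystal_iso_def using assms by (auto intro!: exI[of _ id] simp: option.map_id)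

lemma closed_sub_component: "closed_sub n (component n Y)"
  unfolding closed_sub_def using component.fstep component.estep by blast

theorem lemma5p4:
  fixes n k :: nat and m :: int
  assumes "n \<ge> 2" and "k \<in> {1..2 * n}"
  shows "crystal_iso n (Mk n k m)
           (if k \<le> n then component n (Ymon n k m)
            else component n (Ymon n (2 * n - k) (m - int n + int k)))"
proof -
  have "k \<le> 2 * n" using assms(2) by simp
  then have "Mk n k m = (if k \<le> n then component n (Ymon n k m)
            else component n (Ymon n (2 * n - k) (m - int n + int k)))"
    by (simp add: Mk_eq_component column_identity)
  then show ?thesis using crystal_iso_refl[OF closed_sub_component] by metis
qed

end
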